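(* Let $X$ be a first countable, connected, locally path connected space, $n\in\mathbb{N}$, and let $A_1,\dots,A_n$ be pairwise disjoint, path connected, closed subsets of $X$. Let $p:X\to X/(A_1,\dots,A_n)$ be the associated quotient map. Then for every $a\in\bigcup_{i=1}^nA_i$, with $*=p(a)$, $\overline{p_*\pi_1^{top}(X,a)}=\pi_1^{top}(X/(A_1,\dots,A_n),* )$.
   Context: For subsets $A_1,\dots,A_n$ of a space $X$, $X/(A_1,\dots,A_n)$ denotes the quotient space obtained by collapsing each $A_i$ to a point, with quotient map $p$. $\pi_1^{top}(X,x)$ is $\pi_1(X,x)$ with the quotient topology from the loop space $\Omega(X,x)$ with the compact-open topology; $p_*$ is the induced continuous homomorphism. *)

theory Defs
  imports "HOL-Analysis.Analysis"
begin

definition quot_top :: "'a topology \<Rightarrow> ('a \<Rightarrow> 'b) \<Rightarrow> 'b topology" where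
  "quot_top X f = topology (\<lambda>U. U \<subseteq> f ` topspace X \<and> openin X {x \<in> topspace X. f x \<in> U})"

text \<open>X/(A_1,...,A_n): each point is sent to the A_i containing it, or to its singleton.\<close>
definition collapse_pt :: "nat \<Rightarrow> (nat \<Rightarrow> 'a set) \<Rightarrow> 'a \<Rightarrow> 'a set" where
  "collapse_pt n A x = (if \<exists>i\<in>{1..n}. x \<in> A i then A (SOME i. i \<in> {1..n} \<and> x \<in> A i) else {x})"

definition collapse_space :: "'a topology \<Rightarrow> nat \<Rightarrow> (nat \<Rightarrow> 'a set) \<Rightarrow> 'a set topology" where
  "collapse_space X n A = quot_top X (collapse_pt n A)"

definition loops :: "'a topology \<Rightarrow> 'a \<Rightarrow> (real \<Rightarrow> 'a) set" where
  "loops X x = {g. pathin X g \<and> g 0 = x \<and> g 1 = x}"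

definition loop_space :: "'a topology \<Rightarrow> 'a \<Rightarrow> (real \<Rightarrow> 'a) topology" where
  "loop_space X x = subtopology
     (topology_generated_by {{g. g ` K \<subseteq> U} | K U. compactin (top_of_set {0..1}) K \<and> openin X U})
     (loops X x)"

definition path_homotopic :: "'a topology \<Rightarrow> (real \<Rightarrow> 'a) \<Rightarrow> (real \<Rightarrow> 'a) \<Rightarrow> bool" where
  "path_homotopic X p q = homotopic_with (\<lambda>r. r 0 = p 0 \<and> r 1 = p 1) (top_of_set {0..1}) X p q"

definition loop_class :: "'a topology \<Rightarrow> 'a \<Rightarrow> (real \<Rightarrow> 'a) \<Rightarrow> (real \<Rightarrow> 'a) set" where
  "loop_class X x g = {h \<in> loops X x. path_homotopic X g h}"

definition pi1_top :: "'a topology \<Rightarrow> 'a \<Rightarrow> (real \<Rightarrow> 'a) set topology" where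
  "pi1_top X x = quot_top (loop_space X x) (loop_class X x)"

definition induced_image :: "'a topology \<Rightarrow> 'b topology \<Rightarrow> ('a \<Rightarrow> 'b) \<Rightarrow> 'a \<Rightarrow> (real \<Rightarrow> 'b) set set" where
  "induced_image X Y f x = (\<lambda>g. loop_class Y (f x) (f \<circ> g)) ` loops X x"

end

theory Submission
  imports Defs
begin

(* The proof works for any quotient map p : X -> X/~ of a locally path connected
   space whose fibres are path connected.

   Since pi1_top carries the quotient topology of the loop space and quotient maps are
   continuous, it suffices to show that the loops p o h (h a loop at a) are dense in the loop
   space of the quotient, whose topology is generated by the compact-open subbasis.  So let f
   be a loop at p a and let finitely many constraints f ` K_j <= U_j be given.  Every parameter
   s has a neighbourhood N over which f admits a "lifting cell": a saturated, path connected
   set C (a path component of the preimage of an open set) with f ` N <= p ` C and p ` C inside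
   every U_j whose K_j meets N.  A Lebesgue number gives a uniform subdivision of [0,1] into
   pieces covered by such neighbourhoods; lifting the subdivision points, joining consecutive
   lifts by paths inside the cells and concatenating yields the required loop h. *)

lemma quot_top_openin:
  "openin (quot_top X f) U \<longleftrightarrow> U \<subseteq> f ` topspace X \<and> openin X {x \<in> topspace X. f x \<in> U}"
proof -
  define L where "L = (\<lambda>U. U \<subseteq> f ` topspace X \<and> openin X {x \<in> topspace X. f x \<in> U})"
  have "L (S \<inter> T)" if "L S" "L T" for S T
  proof -
    have "{x \<in> topspace X. f x \<in> S \<inter> T} = {x \<in> topspace X. f x \<in> S} \<inter> {x \<in> topspace X. f x \<in> T}"
      by auto
    with that show ?thesis unfolding L_def by auto
  qed
  moreover have "L (\<Union>\<K>)" if "\<forall>S\<in>\<K>. L S" for \<K>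
  proof -
    have "{x \<in> topspace X. f x \<in> \<Union>\<K>} = (\<Union>S\<in>\<K>. {x \<in> topspace X. f x \<in> S})"
      by auto
    with that show ?thesis unfolding L_def by auto
  qed
  ultimately have "istopology L"
    unfolding istopology_def by blast
  then have "openin (quot_top X f) = L"
    unfolding quot_top_def L_def by simp
  then show ?thesis
    unfolding L_def by simp
qed

lemma quot_top_topspace: "topspace (quot_top X f) = f ` topspace X"
proof
  show "topspace (quot_top X f) \<subseteq> f ` topspace X"
    using quot_top_openin[of X f "topspace (quot_top X f)"] by simp
  have "{x \<in> topspace X. f x \<in> f ` topspace X} = topspace X"
    by auto
  then have "openin (quot_top X f) (f ` topspace X)"
    by (simp add: quot_top_openin)
  then show "f ` topspace X \<subseteq> topspace (quot_top X f)"
    by (rule openin_subset)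
qed

lemma quot_top_cont: "continuous_map X (quot_top X f) f"
  by (auto simp: continuous_map_def quot_top_topspace quot_top_openin)

section \<open>Saturated sets and maps with path-connected fibres\<close>

definition saturated_in :: "'a topology \<Rightarrow> ('a \<Rightarrow> 'b) \<Rightarrow> 'a set \<Rightarrow> bool" where
  "saturated_in X f C \<longleftrightarrow> C \<subseteq> topspace X \<and> (\<forall>x\<in>topspace X. f x \<in> f ` C \<longrightarrow> x \<in> C)"

definition path_connected_fibres :: "'a topology \<Rightarrow> ('a \<Rightarrow> 'b) \<Rightarrow> bool" where
  "path_connected_fibres X f \<longleftrightarrow>
     (\<forall>x\<in>topspace X. \<forall>y\<in>topspace X. f x = f y \<longrightarrow>
        (\<exists>S. path_connectedin X S \<and> x \<in> S \<and> y \<in> S \<and> f ` S \<subseteq> {f x}))"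

lemma quot_top_openin_saturated:
  assumes "saturated_in X f C" "openin X C"
  shows "openin (quot_top X f) (f ` C)"
proof -
  have "{x \<in> topspace X. f x \<in> f ` C} = C"
    using assms(1) unfolding saturated_in_def by auto
  then show ?thesis
    using assms(2) by (auto simp: quot_top_openin dest: openin_subset)
qed

text \<open>If the fibres of f are path connected, then every path component of the preimage of a
  set V is saturated: a fibre meeting the component lies inside the preimage of V.\<close>
lemma path_component_preimage_saturated:
  fixes V x0
  assumes fibres: "path_connected_fibres X f"
  defines "W \<equiv> {x \<in> topspace X. f x \<in> V}"
  shows "saturated_in X f (path_component_of_set (subtopology X W) x0)"
proof -
  let ?C = "path_component_of_set (subtopology X W) x0"
  have CW: "?C \<subseteq> W"
    using path_component_of_subset_topspace[of "subtopology X W" x0] W_def by auto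
  have "y \<in> ?C" if y: "y \<in> topspace X" and c: "c \<in> ?C" "f c = f y" for y c
  proof -
    have cX: "c \<in> topspace X" "f c \<in> V"
      using c CW W_def by auto
    then obtain S where S: "path_connectedin X S" "c \<in> S" "y \<in> S" "f ` S \<subseteq> {f c}"
      using fibres y c(2) unfolding path_connected_fibres_def by blast
    have "S \<subseteq> W"
      using S(1,4) cX(2) path_connectedin_subset_topspace W_def by fastforce
    then have "path_component_of (subtopology X W) c y"
      using S path_component_of path_connectedin_subtopology by metis
    then show ?thesis
      using c(1) path_component_of_trans by fastforce
  qed
  then show ?thesis
    unfolding saturated_in_def using CW W_def by fastforce
qed

text \<open>In a locally path connected space, the path components of the preimage of an open
  set of the quotient are open and saturated, so their images are open in the quotient.\<close>
lemma quot_top_openin_path_component: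
  fixes x0
  assumes lpc: "locally_path_connected_space X" and fibres: "path_connected_fibres X f"
    and V: "openin (quot_top X f) V"
  defines "C \<equiv> path_component_of_set (subtopology X {x \<in> topspace X. f x \<in> V}) x0"
  shows "openin (quot_top X f) (f ` C)"
proof -
  let ?W = "{x \<in> topspace X. f x \<in> V}"
  have W: "openin X ?W"
    using V by (simp add: quot_top_openin)
  then have "openin (subtopology X ?W) C"
    unfolding C_def
    by (intro openin_path_component_of_locally_path_connected_space
              locally_path_connected_space_open_subset[OF lpc])
  then have "openin X C"
    using W openin_trans_full by blast
  moreover have "saturated_in X f C"
    unfolding C_def by (rule path_component_preimage_saturated[OF fibres])
  ultimately show ?thesis
    by (rule quot_top_openin_saturated[rotated])
qed

lemma quot_top_saturated_path_connected_nbhd: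
  assumes lpc: "locally_path_connected_space X" and fibres: "path_connected_fibres X f"
    and V: "openin (quot_top X f) V" and y: "y \<in> V"
  obtains C where "saturated_in X f C" "path_connectedin X C" "openin (quot_top X f) (f ` C)"
    "y \<in> f ` C" "f ` C \<subseteq> V"
proof -
  obtain x0 where x0: "x0 \<in> topspace X" "f x0 = y"
    using openin_subset[OF V] y by (auto simp: quot_top_topspace)
  let ?W = "{x \<in> topspace X. f x \<in> V}"
  define C where "C = path_component_of_set (subtopology X ?W) x0"
  have "saturated_in X f C"
    unfolding C_def by (rule path_component_preimage_saturated[OF fibres])
  moreover have "path_connectedin X C"
    using path_connectedin_path_component_of[of "subtopology X ?W" x0] C_def
    by (simp add: path_connectedin_subtopology)
  moreover have "openin (quot_top X f) (f ` C)"
    unfolding C_def by (rule quot_top_openin_path_component[OF lpc fibres V])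
  moreover have "x0 \<in> C"
    unfolding C_def using x0 y by (simp add: path_component_of_refl)
  then have "y \<in> f ` C"
    using x0(2) by blast
  moreover have "C \<subseteq> ?W"
    using path_component_of_subset_topspace[of "subtopology X ?W" x0] C_def by auto
  then have "f ` C \<subseteq> V"
    by blast
  ultimately show ?thesis
    by (rule that)
qed

section \<open>The collapse map\<close>

lemma collapse_pt_notin: "\<not> (\<exists>i\<in>{1..n}. z \<in> A i) \<Longrightarrow> collapse_pt n A z = {z}"
  by (simp add: collapse_pt_def)

context
  fixes n :: nat and A :: "nat \<Rightarrow> 'a set"
  assumes disj: "\<And>i j. i \<in> {1..n} \<Longrightarrow> j \<in> {1..n} \<Longrightarrow> i \<noteq> j \<Longrightarrow> A i \<inter> A j = {}"
begin

lemma collapse_pt_in: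
  assumes "i \<in> {1..n}" "z \<in> A i"
  shows "collapse_pt n A z = A i"
proof -
  have ex: "\<exists>i\<in>{1..n}. z \<in> A i"
    using assms by blast
  let ?j = "SOME i. i \<in> {1..n} \<and> z \<in> A i"
  have "?j \<in> {1..n} \<and> z \<in> A ?j"
    by (rule someI_ex) (use ex in blast)
  then have "?j = i"
    using disj[of ?j i] assms by blast
  then show ?thesis
    unfolding collapse_pt_def using ex by simp
qed

lemma collapse_pt_eqD:
  assumes eq: "collapse_pt n A x = collapse_pt n A y" and "x \<noteq> y"
  shows "\<exists>i\<in>{1..n}. x \<in> A i \<and> y \<in> A i"
proof (cases "\<exists>i\<in>{1..n}. x \<in> A i")
  case True
  then obtain i where i: "i \<in> {1..n}" "x \<in> A i"
    by blast
  then have y: "collapse_pt n A y = A i"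
    using eq collapse_pt_in by metis
  show ?thesis
  proof (cases "\<exists>j\<in>{1..n}. y \<in> A j")
    case True
    then show ?thesis
      using y i collapse_pt_in by metis
  next
    case False
    then show ?thesis
      using y i \<open>x \<noteq> y\<close> collapse_pt_notin[of n y A] by auto
  qed
next
  case False
  then have x: "collapse_pt n A x = {x}"
    by (rule collapse_pt_notin)
  show ?thesis
  proof (cases "\<exists>j\<in>{1..n}. y \<in> A j")
    case True
    then show ?thesis
      using x eq False collapse_pt_in by (metis singletonI)
  next
    case False
    then show ?thesis
      using x eq \<open>x \<noteq> y\<close> collapse_pt_notin[of n y A] by auto
  qed
qed

text \<open>The fibres of the collapse map are the sets A i and singletons, all path connected.\<close>
lemma collapse_pt_path_connected_fibres:
  assumes pc: "\<And>i. i \<in> {1..n} \<Longrightarrow> path_connectedin X (A i)"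
  shows "path_connected_fibres X (collapse_pt n A)"
  unfolding path_connected_fibres_def
proof (intro ballI impI)
  fix x y assume x: "x \<in> topspace X" and "y \<in> topspace X"
    and eq: "collapse_pt n A x = collapse_pt n A y"
  show "\<exists>S. path_connectedin X S \<and> x \<in> S \<and> y \<in> S \<and> collapse_pt n A ` S \<subseteq> {collapse_pt n A x}"
  proof (cases "x = y")
    case True
    then show ?thesis
      using x by (intro exI[of _ "{x}"]) auto
  next
    case False
    then obtain i where "i \<in> {1..n}" "x \<in> A i" "y \<in> A i"
      using collapse_pt_eqD[OF eq] by blast
    then show ?thesis
      using pc collapse_pt_in by (intro exI[of _ "A i"]) auto
  qed
qed

end

lemma generate_topology_on_nbhd:
  assumes "generate_topology_on \<S> T" "x \<in> T"
  shows "\<exists>\<F>. finite \<F> \<and> \<F> \<subseteq> \<S> \<and> x \<in> \<Inter>\<F> \<and> \<Inter>\<F> \<subseteq> T"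
  using assms
proof (induction arbitrary: x rule: generate_topology_on.induct)
  case Empty
  then show ?case by simp
next
  case (Int a b)
  then have "x \<in> a" "x \<in> b"
    by auto
  then obtain \<F>1 \<F>2 where "finite \<F>1 \<and> \<F>1 \<subseteq> \<S> \<and> x \<in> \<Inter>\<F>1 \<and> \<Inter>\<F>1 \<subseteq> a"
    and "finite \<F>2 \<and> \<F>2 \<subseteq> \<S> \<and> x \<in> \<Inter>\<F>2 \<and> \<Inter>\<F>2 \<subseteq> b"
    using Int.IH by meson
  then show ?case
    by (intro exI[of _ "\<F>1 \<union> \<F>2"]) auto
next
  case (UN K)
  then obtain k where k: "k \<in> K" "x \<in> k"
    by blast
  then obtain \<F> where "finite \<F> \<and> \<F> \<subseteq> \<S> \<and> x \<in> \<Inter>\<F> \<and> \<Inter>\<F> \<subseteq> k"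
    using UN.IH[OF k] by blast
  with k(1) show ?case
    by (intro exI[of _ \<F>]) blast
next
  case (Basis s)
  then show ?case
    by (intro exI[of _ "{s}"]) auto
qed

lemma dense_in_generated_subtopology:
  assumes "\<And>\<F> x. \<lbrakk>finite \<F>; \<F> \<subseteq> \<S>; x \<in> T; x \<in> \<Inter>\<F>\<rbrakk> \<Longrightarrow> \<exists>d\<in>D. d \<in> T \<inter> \<Inter>\<F>"
  shows "subtopology (topology_generated_by \<S>) T closure_of D
           = topspace (subtopology (topology_generated_by \<S>) T)"
proof (rule equalityI[OF closure_of_subset_topspace subsetI])
  fix x assume x: "x \<in> topspace (subtopology (topology_generated_by \<S>) T)"
  show "x \<in> subtopology (topology_generated_by \<S>) T closure_of D"
    unfolding in_closure_of
  proof (intro conjI allI impI x)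
    fix G assume G: "x \<in> G \<and> openin (subtopology (topology_generated_by \<S>) T) G"
    then obtain G' where G': "openin (topology_generated_by \<S>) G'" "G = G' \<inter> T"
      unfolding openin_subtopology by blast
    have gen: "generate_topology_on \<S> G'"
      using G'(1) by (rule openin_topology_generated_by)
    have "x \<in> G'"
      using G G'(2) by blast
    then obtain \<F> where \<F>: "finite \<F>" "\<F> \<subseteq> \<S>" "x \<in> \<Inter>\<F>" "\<Inter>\<F> \<subseteq> G'"
      using generate_topology_on_nbhd[OF gen \<open>x \<in> G'\<close>] by (elim exE conjE)
    have "x \<in> T"
      using x by simp
    then obtain d where "d \<in> D" "d \<in> T \<inter> \<Inter>\<F>"
      using assms[OF \<F>(1,2) _ \<F>(3)] by blast
    then show "\<exists>d. d \<in> D \<and> d \<in> G"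
      using \<F>(4) G'(2) by blast
  qed
qed

definition co_subbasis :: "'b topology \<Rightarrow> (real \<Rightarrow> 'b) set set" where
  "co_subbasis Y = {{g. g ` K \<subseteq> U} | K U. compactin (top_of_set {0..1}) K \<and> openin Y U}"

lemma loop_space_subbasis:
  "loop_space Y y = subtopology (topology_generated_by (co_subbasis Y)) (loops Y y)"
  by (simp add: loop_space_def co_subbasis_def)

section \<open>Uniform subdivisions of the unit interval\<close>

definition piece :: "nat \<Rightarrow> nat \<Rightarrow> real set" where
  "piece M k = {real k / real M .. real (Suc k) / real M}"

lemma mem_piece:
  assumes "0 < M"
  shows "t \<in> piece M k \<longleftrightarrow> real k \<le> real M * t \<and> real M * t \<le> real k + 1"
  using assms unfolding piece_def
  by (simp add: divide_le_eq le_divide_eq mult.commute add.commute)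

lemma piece_subset: "k < M \<Longrightarrow> piece M k \<subseteq> {0..1}"
  by (auto simp: piece_def divide_le_eq)

lemma pieces_cover:
  assumes M: "0 < M" and t: "t \<in> {0..1}"
  shows "\<exists>k<M. t \<in> piece M k"
proof (cases "t = 1")
  case True
  then have "t \<in> piece M (M - 1)"
    using M by (simp add: mem_piece of_nat_diff)
  then show ?thesis
    using M by (intro exI[of _ "M - 1"]) auto
next
  case False
  define k where "k = nat \<lfloor>real M * t\<rfloor>"
  have "0 \<le> \<lfloor>real M * t\<rfloor>"
    using t by simp
  then have k: "real k \<le> real M * t" "real M * t < real k + 1"
    unfolding k_def by linarith+
  moreover have "real M * t < real M"
    using t False M by simp
  ultimately have "real k < real M"
    by linarith
  then show ?thesis
    using k M by (intro exI[of _ k]) (auto simp: mem_piece)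
qed

lemma uniform_subdivision:
  assumes cover: "\<And>t. t \<in> {0..1} \<Longrightarrow> \<exists>N\<in>\<N>. t \<in> N" and opn: "\<And>N. N \<in> \<N> \<Longrightarrow> open N"
  obtains M where "0 < M" "\<And>k. k < M \<Longrightarrow> \<exists>N\<in>\<N>. piece M k \<subseteq> N"
proof -
  obtain \<delta> where \<delta>: "0 < \<delta>" "\<And>T. \<lbrakk>T \<subseteq> {0..1}; diameter T < \<delta>\<rbrakk> \<Longrightarrow> \<exists>N\<in>\<N>. T \<subseteq> N"
  proof (rule Lebesgue_number_lemma[of "{0..1::real}" \<N>])
    show "\<N> \<noteq> {}"
      using cover[of 0] by auto
    show "{0..1::real} \<subseteq> \<Union>\<N>"
      using cover by blast
  qed (use opn in auto)
  obtain M :: nat where M: "0 < M" "inverse (real M) < \<delta>"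
    using ex_inverse_of_nat_less[OF \<delta>(1)] by auto
  have "\<exists>N\<in>\<N>. piece M k \<subseteq> N" if "k < M" for k
  proof (rule \<delta>(2)[OF piece_subset[OF that]])
    have "diameter (piece M k) = inverse (real M)"
      unfolding piece_def using M
      by (simp add: diff_divide_distrib[symmetric] divide_inverse algebra_simps)
    then show "diameter (piece M k) < \<delta>"
      using M by simp
  qed
  then show ?thesis
    using M that by blast
qed

lemma pathin_concat_pieces:
  assumes M: "0 < M" and paths: "\<And>k. k < M \<Longrightarrow> pathin X (\<gamma> k)"
    and joins: "\<And>k. Suc k < M \<Longrightarrow> \<gamma> k 1 = \<gamma> (Suc k) 0"
  obtains h where "pathin X h" "h 0 = \<gamma> 0 0" "h 1 = \<gamma> (M - 1) 1"
    "\<And>k t. \<lbrakk>k < M; t \<in> piece M k\<rbrakk> \<Longrightarrow> h t = \<gamma> k (real M * t - real k)"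
proof -
  let ?I = "top_of_set {0..1::real}"
  let ?g = "\<lambda>k t. \<gamma> k (real M * t - real k)"
  have closed: "closedin ?I (piece M k)" if "k \<in> {..<M}" for k
    using piece_subset[of k M] that unfolding closedin_closed
    by (intro exI[of _ "piece M k"]) (auto simp: piece_def)
  have cont: "continuous_map (subtopology ?I (piece M k)) X (?g k)" if "k \<in> {..<M}" for k
  proof -
    have "continuous_map (top_of_set (piece M k)) ?I (\<lambda>t. real M * t - real k)"
      using M by (auto simp: mem_piece intro!: continuous_intros)
    then have "continuous_map (top_of_set (piece M k)) X (\<gamma> k \<circ> (\<lambda>t. real M * t - real k))"
      using continuous_map_compose paths that unfolding pathin_def by blast
    then show ?thesis
      using piece_subset[of k M] that by (simp add: subtopology_subtopology Int_absorb1 o_def)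
  qed
  have adjacent: "?g i t = ?g j t" if "i < M" "j < M" "i < j" "t \<in> piece M i" "t \<in> piece M j" for i j t
  proof -
    have "j = Suc i" and "real M * t = real j"
      using that M unfolding mem_piece[OF M] by linarith+
    then show ?thesis
      using joins that(2) by simp
  qed
  have compat: "?g i t = ?g j t"
    if "i \<in> {..<M}" "j \<in> {..<M}" "t \<in> topspace ?I \<inter> piece M i \<inter> piece M j" for i j t
    using adjacent[of i j t] adjacent[of j i t] that by (cases i j rule: linorder_cases) auto
  have "topspace ?I \<subseteq> \<Union>(piece M ` {..<M})"
    using pieces_cover[OF M] by fastforce
  then obtain h where h: "continuous_map ?I X h"
    and on_piece: "\<And>t k. \<lbrakk>k \<in> {..<M}; t \<in> topspace ?I \<inter> piece M k\<rbrakk> \<Longrightarrow> h t = ?g k t"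
    by (rule pasting_lemma_exists_closed[OF finite_lessThan _ closed cont compat]) blast+
  show ?thesis
  proof
    show "pathin X h"
      using h by (simp add: pathin_def)
    show "h 0 = \<gamma> 0 0"
      using on_piece[of 0 0] M by (simp add: mem_piece)
    show "h 1 = \<gamma> (M - 1) 1"
      using on_piece[of "M - 1" 1] M by (simp add: mem_piece of_nat_diff)
    show "h t = ?g k t" if "k < M" "t \<in> piece M k" for k t
      using on_piece[of k t] piece_subset[of k M] that by auto
  qed
qed

section \<open>Approximating loops of the quotient by images of loops\<close>

definition lifting_cell ::
  "'a topology \<Rightarrow> ('a \<Rightarrow> 'b) \<Rightarrow> (real \<Rightarrow> 'b) \<Rightarrow> (real set \<times> 'b set) set \<Rightarrow> real set \<Rightarrow> 'a set \<Rightarrow> bool"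
where
  "lifting_cell X p f P I C \<longleftrightarrow> saturated_in X p C \<and> path_connectedin X C \<and> f ` I \<subseteq> p ` C \<and>
     (\<forall>K U. (K, U) \<in> P \<longrightarrow> K \<inter> I \<noteq> {} \<longrightarrow> p ` C \<subseteq> U)"

lemma lifting_cell_covers:
  assumes "lifting_cell X p f P I C" "t \<in> I"
  shows "f t \<in> p ` C"
proof -
  have "f ` I \<subseteq> p ` C"
    using assms(1) unfolding lifting_cell_def by (elim conjE)
  then show ?thesis
    using assms(2) by (rule subsetD[OF _ imageI])
qed

lemma lifting_cell_saturated:
  assumes "lifting_cell X p f P I C" "x \<in> topspace X" "p x \<in> p ` C"
  shows "x \<in> C"
proof -
  have "saturated_in X p C"
    using assms(1) unfolding lifting_cell_def by (elim conjE)
  then show ?thesis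
    using assms(2,3) unfolding saturated_in_def by simp
qed

lemma lifting_cell_path:
  assumes "lifting_cell X p f P I C" "x \<in> C" "y \<in> C"
  shows "\<exists>g. pathin X g \<and> g \<in> {0..1} \<rightarrow> C \<and> g 0 = x \<and> g 1 = y"
proof -
  have "path_connectedin X C"
    using assms(1) unfolding lifting_cell_def by (elim conjE)
  then have "\<forall>x\<in>C. \<forall>y\<in>C. \<exists>g. pathin X g \<and> g \<in> {0..1} \<rightarrow> C \<and> g 0 = x \<and> g 1 = y"
    unfolding path_connectedin by (elim conjE)
  then show ?thesis
    using assms(2,3) by simp
qed

lemma lifting_cell_respects:
  assumes "lifting_cell X p f P I C" "(K, U) \<in> P" "t \<in> K" "t \<in> I"
  shows "p ` C \<subseteq> U"
proof -
  have "\<forall>K U. (K, U) \<in> P \<longrightarrow> K \<inter> I \<noteq> {} \<longrightarrow> p ` C \<subseteq> U"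
    using assms(1) unfolding lifting_cell_def by (elim conjE)
  moreover have "K \<inter> I \<noteq> {}"
    using assms(3,4) by blast
  ultimately show ?thesis
    using assms(2) by simp
qed

lemma lifting_cell_mono:
  assumes cell: "lifting_cell X p f P J C" and IJ: "I \<subseteq> J"
  shows "lifting_cell X p f P I C"
  unfolding lifting_cell_def
proof (intro conjI allI impI)
  show "saturated_in X p C" "path_connectedin X C"
    using cell unfolding lifting_cell_def by simp_all
  show "f ` I \<subseteq> p ` C"
    using lifting_cell_covers[OF cell] IJ by blast
  show "p ` C \<subseteq> U" if "(K, U) \<in> P" "K \<inter> I \<noteq> {}" for K U
    using lifting_cell_respects[OF cell that(1)] that(2) IJ by blast
qed


context
  fixes X :: "'a topology" and p :: "'a \<Rightarrow> 'b" and f :: "real \<Rightarrow> 'b" and P :: "(real set \<times> 'b set) set"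
  assumes lpc: "locally_path_connected_space X" and fibres: "path_connected_fibres X p"
    and f: "pathin (quot_top X p) f"
    and P: "finite P"
      "\<And>K U. (K, U) \<in> P \<Longrightarrow> compactin (top_of_set {0..1}) K \<and> openin (quot_top X p) U \<and> f ` K \<subseteq> U"
begin

text \<open>Every parameter s has an open neighbourhood over which f admits a lifting cell: take the
  path component of a preimage of f s inside the preimage of all constraints U with s in K,
  and shrink to the parameters mapped into its (open) image and lying outside the K not containing s.\<close>
lemma local_lifting_cell:
  assumes s: "s \<in> {0..1}"
  shows "\<exists>N. open N \<and> s \<in> N \<and> (\<exists>C. lifting_cell X p f P (N \<inter> {0..1}) C)"
proof -
  let ?Y = "quot_top X p"
  have Pq: "compactin (top_of_set {0..1}) (fst q) \<and> openin ?Y (snd q) \<and> f ` fst q \<subseteq> snd q"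
    if "q \<in> P" for q
    using P(2)[of "fst q" "snd q"] that by simp
  define V where "V = topspace ?Y \<inter> \<Inter>(snd ` {q \<in> P. s \<in> fst q})"
  have V: "openin ?Y V"
    unfolding V_def by (rule openin_Int_Inter) (use P(1) Pq in auto)
  have "f s \<in> topspace ?Y"
    by (rule funcset_mem[OF path_image_subset_topspace[OF f] s])
  then have "f s \<in> V"
    unfolding V_def using Pq by blast
  then obtain C where sat: "saturated_in X p C" and pcC: "path_connectedin X C"
    and C_open: "openin ?Y (p ` C)" and fsC: "f s \<in> p ` C" and CV: "p ` C \<subseteq> V"
    by (rule quot_top_saturated_path_connected_nbhd[OF lpc fibres V])
  have "openin (top_of_set {0..1}) {t \<in> {0..1}. f t \<in> p ` C}"
    using openin_continuous_map_preimage[OF f[unfolded pathin_def] C_open] by simp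
  then obtain G where G: "open G" "{t \<in> {0..1}. f t \<in> p ` C} = {0..1} \<inter> G"
    by (auto simp: openin_open)
  have G_iff: "t \<in> G \<longleftrightarrow> f t \<in> p ` C" if "t \<in> {0..1}" for t
    using G(2) that by (auto simp: set_eq_iff)
  define N where "N = G \<inter> (\<Inter>q\<in>{q \<in> P. s \<notin> fst q}. - fst q)"
  have "open N"
    unfolding N_def
  proof (intro open_Int open_INT ballI G(1))
    fix q assume "q \<in> {q \<in> P. s \<notin> fst q}"
    then have "compact (fst q)"
      using Pq by (simp add: compactin_subtopology)
    then show "open (- fst q)"
      by (simp add: compact_imp_closed open_Compl)
  qed (use P(1) in simp)
  moreover have "s \<in> N"
    unfolding N_def using G_iff[OF s] fsC by blast
  moreover have cover: "f ` (N \<inter> {0..1}) \<subseteq> p ` C"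
    using G_iff unfolding N_def by blast
  have respects: "p ` C \<subseteq> U" if KU: "(K, U) \<in> P" and meets: "K \<inter> (N \<inter> {0..1}) \<noteq> {}" for K U
  proof -
    have "s \<in> K"
    proof (rule ccontr)
      assume "s \<notin> K"
      then have "N \<subseteq> - K"
        unfolding N_def using KU by force
      then show False
        using meets by blast
    qed
    then have "V \<subseteq> U"
      unfolding V_def using KU by force
    then show ?thesis
      using CV by blast
  qed
  have "lifting_cell X p f P (N \<inter> {0..1}) C"
    unfolding lifting_cell_def
  proof (intro conjI sat pcC cover allI impI)
    show "p ` C \<subseteq> U" if "(K, U) \<in> P" "K \<inter> (N \<inter> {0..1}) \<noteq> {}" for K U
      using respects that .
  qed
  ultimately show ?thesis
    by blast
qed

text \<open>By the Lebesgue number lemma, some uniform subdivision of [0,1] has a lifting cell over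
  each of its pieces.\<close>
lemma subdivision_with_lifting_cells:
  obtains M C where "0 < M" "\<And>k. k < M \<Longrightarrow> lifting_cell X p f P (piece M k) (C k)"
proof -
  let ?good = "{N. open N \<and> (\<exists>C. lifting_cell X p f P (N \<inter> {0..1}) C)}"
  obtain M where M: "0 < M" and fine: "\<And>k. k < M \<Longrightarrow> \<exists>N\<in>?good. piece M k \<subseteq> N"
  proof (rule uniform_subdivision[of ?good])
    show "\<exists>N\<in>?good. t \<in> N" if "t \<in> {0..1}" for t
      using local_lifting_cell[OF that] by auto
    show "open N" if "N \<in> ?good" for N
      using that by simp
  qed (rule that)
  have "\<exists>C. lifting_cell X p f P (piece M k) C" if k: "k < M" for k
  proof -
    obtain N C where "piece M k \<subseteq> N" "lifting_cell X p f P (N \<inter> {0..1}) C"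
      using fine[OF k] by auto
    then show ?thesis
      using lifting_cell_mono piece_subset[OF k] by (metis le_inf_iff)
  qed
  then obtain C where "\<And>k. k < M \<Longrightarrow> lifting_cell X p f P (piece M k) (C k)"
    by metis
  with M show ?thesis
    by (rule that)
qed

lemma subdivision_point_lifts:
  assumes M: "0 < M" and a: "a \<in> topspace X" and ends: "f 0 = p a" "f 1 = p a"
  shows "\<exists>x. \<forall>k\<in>{..M}.
    x k \<in> topspace X \<and> p (x k) = f (real k / real M) \<and> (k = 0 \<or> k = M \<longrightarrow> x k = a)"
proof (rule bchoice, rule ballI)
  fix k assume "k \<in> {..M}"
  then have "real k / real M \<in> {0..1}"
    using M by (simp add: divide_le_eq)
  then have "f (real k / real M) \<in> p ` topspace X"
    using path_image_subset_topspace[OF f] by (auto simp: quot_top_topspace)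
  then show "\<exists>y. y \<in> topspace X \<and> p y = f (real k / real M) \<and> (k = 0 \<or> k = M \<longrightarrow> y = a)"
    using a ends M by (cases "k = 0 \<or> k = M") auto
qed

text \<open>Given lifting cells over the pieces of a subdivision, a loop at a runs through the cells
  piece by piece: lift the subdivision points (the end points to a), join consecutive lifts by
  paths inside the common cell, and concatenate.\<close>
lemma loop_through_cells:
  assumes M: "0 < M" and C: "\<And>k. k < M \<Longrightarrow> lifting_cell X p f P (piece M k) (C k)"
    and a: "a \<in> topspace X" and ends: "f 0 = p a" "f 1 = p a"
  obtains h where "h \<in> loops X a" "\<And>k t. \<lbrakk>k < M; t \<in> piece M k\<rbrakk> \<Longrightarrow> h t \<in> C k"
proof -
  obtain x where x: "\<forall>k\<in>{..M}.
      x k \<in> topspace X \<and> p (x k) = f (real k / real M) \<and> (k = 0 \<or> k = M \<longrightarrow> x k = a)"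
    using subdivision_point_lifts[OF M a ends] by (elim exE)
  have x_C: "x j \<in> C k" if k: "k < M" and j: "j = k \<or> j = Suc k" for j k
  proof -
    have "real j / real M \<in> piece M k"
      using k j M by (auto simp: mem_piece)
    then have "p (x j) \<in> p ` C k"
      using lifting_cell_covers[OF C[OF k]] x k j by auto
    then show ?thesis
      using lifting_cell_saturated[OF C[OF k]] x k j by auto
  qed
  have "\<forall>k\<in>{..<M}. \<exists>g. pathin X g \<and> g \<in> {0..1} \<rightarrow> C k \<and> g 0 = x k \<and> g 1 = x (Suc k)"
  proof
    fix k assume "k \<in> {..<M}"
    then have k: "k < M"
      by simp
    show "\<exists>g. pathin X g \<and> g \<in> {0..1} \<rightarrow> C k \<and> g 0 = x k \<and> g 1 = x (Suc k)"
      by (rule lifting_cell_path[OF C[OF k] x_C[OF k] x_C[OF k]]) simp_all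
  qed
  then obtain \<gamma> where \<gamma>: "\<forall>k\<in>{..<M}.
      pathin X (\<gamma> k) \<and> \<gamma> k \<in> {0..1} \<rightarrow> C k \<and> \<gamma> k 0 = x k \<and> \<gamma> k 1 = x (Suc k)"
    by (elim bchoice[THEN exE])
  obtain h where h: "pathin X h" "h 0 = \<gamma> 0 0" "h 1 = \<gamma> (M - 1) 1"
    and h_piece: "\<And>k t. \<lbrakk>k < M; t \<in> piece M k\<rbrakk> \<Longrightarrow> h t = \<gamma> k (real M * t - real k)"
  proof (rule pathin_concat_pieces[OF M])
    show "pathin X (\<gamma> k)" if "k < M" for k
      using \<gamma> that by simp
    show "\<gamma> k 1 = \<gamma> (Suc k) 0" if "Suc k < M" for k
      using \<gamma> that by simp
  qed (rule that)
  have "x 0 = a" "x M = a"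
    using bspec[OF x, of 0] bspec[OF x, of M] by simp_all
  moreover have "Suc (M - 1) = M"
    using M by simp
  ultimately have "h 0 = a" "h 1 = a"
    using h(2,3) bspec[OF \<gamma>, of 0] bspec[OF \<gamma>, of "M - 1"] M by simp_all
  then have "h \<in> loops X a"
    using h(1) unfolding loops_def by simp
  moreover have "h t \<in> C k" if k: "k < M" "t \<in> piece M k" for k t
  proof -
    have arg: "real M * t - real k \<in> {0..1}"
      using k M by (simp add: mem_piece)
    have "\<gamma> k \<in> {0..1} \<rightarrow> C k"
      using \<gamma> k(1) by simp
    from funcset_mem[OF this arg] show ?thesis
      by (simp add: h_piece[OF k])
  qed
  ultimately show ?thesis
    by (rule that)
qed

text \<open>Approximation of a loop f at p a by images of loops at a: the loop running through the
  lifting cells of a fine subdivision respects every constraint in P, since every cell does.\<close>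
lemma approximate_loop_lift:
  assumes a: "a \<in> topspace X" and ends: "f 0 = p a" "f 1 = p a"
  shows "\<exists>h\<in>loops X a. \<forall>(K, U)\<in>P. (p \<circ> h) ` K \<subseteq> U"
proof -
  obtain M C where M: "0 < M" and C: "\<And>k. k < M \<Longrightarrow> lifting_cell X p f P (piece M k) (C k)"
    by (rule subdivision_with_lifting_cells) (rule that)
  obtain h where h: "h \<in> loops X a" and in_cells: "\<And>k t. \<lbrakk>k < M; t \<in> piece M k\<rbrakk> \<Longrightarrow> h t \<in> C k"
  proof (rule loop_through_cells[OF M _ a ends])
    show "lifting_cell X p f P (piece M k) (C k)" if "k < M" for k
      using C[OF that] .
  qed (rule that)
  have respects: "(p \<circ> h) ` K \<subseteq> U" if KU: "(K, U) \<in> P" for K U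
  proof (rule image_subsetI)
    fix t assume t: "t \<in> K"
    have "compactin (top_of_set {0..1}) K"
      using P(2)[OF KU] by (elim conjE)
    then have "K \<subseteq> {0..1}"
      using compactin_subset_topspace by fastforce
    then have "t \<in> {0..1}"
      using t by (rule subsetD)
    then have "\<exists>k<M. t \<in> piece M k"
      by (rule pieces_cover[OF M])
    then obtain k where k: "k < M" "t \<in> piece M k"
      by (elim exE conjE)
    have "p ` C k \<subseteq> U"
      using lifting_cell_respects[OF C[OF k(1)] KU t k(2)] .
    with in_cells[OF k] show "(p \<circ> h) t \<in> U"
      by (simp add: image_subset_iff)
  qed
  show ?thesis
  proof (intro bexI[of _ h] ballI h)
    fix q assume "q \<in> P"
    then show "case q of (K, U) \<Rightarrow> (p \<circ> h) ` K \<subseteq> U"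
      using respects by (cases q) simp
  qed
qed

end

lemma dense_lifted_loops:
  assumes lpc: "locally_path_connected_space X" and fibres: "path_connected_fibres X p"
    and a: "a \<in> topspace X"
  shows "loop_space (quot_top X p) (p a) closure_of ((\<circ>) p ` loops X a)
           = topspace (loop_space (quot_top X p) (p a))"
  unfolding loop_space_subbasis
proof (rule dense_in_generated_subtopology)
  let ?Y = "quot_top X p"
  let ?basic = "\<lambda>(K, U). {g :: real \<Rightarrow> 'b. g ` K \<subseteq> U}"
  fix \<F> f
  assume \<F>: "finite \<F>" "\<F> \<subseteq> co_subbasis ?Y"
    and f: "f \<in> loops ?Y (p a)" "f \<in> \<Inter>\<F>"
  have "\<F> \<subseteq> ?basic ` {(K, U). compactin (top_of_set {0..1}) K \<and> openin ?Y U}"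
    using \<F>(2) unfolding co_subbasis_def by auto
  then have "\<exists>P \<subseteq> {(K, U). compactin (top_of_set {0..1}) K \<and> openin ?Y U}.
      finite P \<and> \<F> = ?basic ` P"
    by (rule finite_subset_image[OF \<F>(1)])
  then obtain P where P: "P \<subseteq> {(K, U). compactin (top_of_set {0..1}) K \<and> openin ?Y U}"
    "finite P" "\<F> = ?basic ` P"
    by (elim exE conjE)
  have fpath: "pathin ?Y f" and f_ends: "f 0 = p a" "f 1 = p a"
    using f(1) unfolding loops_def by simp_all
  have "\<exists>h\<in>loops X a. \<forall>(K, U)\<in>P. (p \<circ> h) ` K \<subseteq> U"
  proof (rule approximate_loop_lift[OF lpc fibres fpath P(2) _ a f_ends])
    show "compactin (top_of_set {0..1}) K \<and> openin ?Y U \<and> f ` K \<subseteq> U" if "(K, U) \<in> P" for K U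
      using that P f(2) by blast
  qed
  then obtain h where h: "h \<in> loops X a" and respects: "\<forall>(K, U)\<in>P. (p \<circ> h) ` K \<subseteq> U"
    by (elim bexE)
  have "p \<circ> h \<in> loops ?Y (p a)"
    using h continuous_map_compose[OF _ quot_top_cont] unfolding loops_def pathin_def by auto
  moreover have "p \<circ> h \<in> \<Inter>\<F>"
  proof
    fix S assume "S \<in> \<F>"
    then obtain K U where KU: "(K, U) \<in> P" and S: "S = {g. g ` K \<subseteq> U}"
      using P(3) by auto
    show "p \<circ> h \<in> S"
      using bspec[OF respects KU] S by simp
  qed
  ultimately show "\<exists>d\<in>(\<circ>) p ` loops X a. d \<in> loops ?Y (p a) \<inter> \<Inter>\<F>"
    using h by blast
qed

theorem quotient_pi1_dense:
  assumes lpc: "locally_path_connected_space X" and fibres: "path_connected_fibres X p"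
    and a: "a \<in> topspace X"
  shows "pi1_top (quot_top X p) (p a) closure_of induced_image X (quot_top X p) p a
           = topspace (pi1_top (quot_top X p) (p a))"
proof -
  let ?Y = "quot_top X p"
  let ?L = "loop_space ?Y (p a)" and ?q = "loop_class ?Y (p a)"
  have q: "continuous_map ?L (pi1_top ?Y (p a)) ?q"
    unfolding pi1_top_def by (rule quot_top_cont)
  have image: "induced_image X ?Y p a = ?q ` ((\<circ>) p ` loops X a)"
    unfolding induced_image_def by (simp add: image_image)
  have "topspace (pi1_top ?Y (p a)) = ?q ` topspace ?L"
    unfolding pi1_top_def by (rule quot_top_topspace)
  also have "\<dots> = ?q ` (?L closure_of ((\<circ>) p ` loops X a))"
    by (simp only: dense_lifted_loops[OF lpc fibres a])
  also have "\<dots> \<subseteq> pi1_top ?Y (p a) closure_of induced_image X ?Y p a"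
    unfolding image by (rule continuous_map_image_closure_subset[OF q])
  finally show ?thesis
    by (rule equalityI[OF closure_of_subset_topspace])
qed

theorem corollary3p12:
  fixes X :: "'a topology" and n :: nat and A :: "nat \<Rightarrow> 'a set" and a :: 'a
  assumes "first_countable X" and "connected_space X" and "locally_path_connected_space X"
    and "\<And>i j. i \<in> {1..n} \<Longrightarrow> j \<in> {1..n} \<Longrightarrow> i \<noteq> j \<Longrightarrow> A i \<inter> A j = {}"
    and "\<And>i. i \<in> {1..n} \<Longrightarrow> path_connectedin X (A i)"
    and "\<And>i. i \<in> {1..n} \<Longrightarrow> closedin X (A i)"
    and "a \<in> (\<Union>i\<in>{1..n}. A i)"
  shows "(pi1_top (collapse_space X n A) (collapse_pt n A a)) closure_of
           (induced_image X (collapse_space X n A) (collapse_pt n A) a)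
         = topspace (pi1_top (collapse_space X n A) (collapse_pt n A a))"
proof -
  have a: "a \<in> topspace X"
    using assms(5,7) path_connectedin_subset_topspace by blast
  have fibres: "path_connected_fibres X (collapse_pt n A)"
    using assms(4,5) by (rule collapse_pt_path_connected_fibres)
  show ?thesis
    unfolding collapse_space_def using assms(3) fibres a by (rule quotient_pi1_dense)
qed

end
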